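(* Let $\Sigma$ be a finite alphabet, $\# \notin \Sigma$ a padding symbol, and $\Sigma_\# = \Sigma \cup \{\#\}$. Let $\mathcal{A} = (\Sigma_\# \times \Sigma_\#, Q, \delta, q_0, F)$ be a deterministic transducer satisfying the following two conditions: (C4) from every state of $\mathcal{A}$ some accepting state (an element of $F$) is reachable; (C11) the relation $R \subseteq \Sigma^* \times \Sigma^*$ recognised by $\mathcal{A}$ only relates words with the same Parikh vector, i.e. $(v,w) \in R$ implies $\mathbb{P}(v) = \mathbb{P}(w)$. Let $\rho_1$ and $\rho_2$ be paths in $\mathcal{A}$ that both start in the initial state $q_0$ and both end in the same (not necessarily accepting) state $q \in Q$, and let $v_1 \otimes w_1$ and $v_2 \otimes w_2$ be the words (over $\Sigma_\# \times \Sigma_\#$) read along $\rho_1$ and $\rho_2$, respectively, where $v_i$ is the first track and $w_i$ the second track. Then $$\mathbb{P}(w_1) - \mathbb{P}(v_1) = \mathbb{P}(w_2) - \mathbb{P}(v_2).$$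
   Context: A transducer (letter-to-letter automaton) over $\Sigma$ is a finite automaton $(\Sigma_\# \times \Sigma_\#, Q, \delta, q_0, F)$ whose input letters are pairs $(a,b)$ with $a,b \in \Sigma_\#$; a word over $\Sigma_\#\times\Sigma_\#$ of the form $(a_1,b_1)\cdots(a_k,b_k)$ is written $v \otimes w$ with $v = a_1\cdots a_k$, $w = b_1 \cdots b_k$. For $v,w \in \Sigma^*$, $v \otimes w$ is obtained by padding the shorter word with $\#$ to equal length; the transducer recognises the relation $R = \{(v,w) \in \Sigma^*\times\Sigma^* : v\otimes w \text{ is accepted by } \mathcal{A}\}$. Deterministic means that for each state and each letter of $\Sigma_\#\times\Sigma_\#$ there is at most one transition. For $\Sigma = \{s_1,\dots,s_n\}$, the Parikh vector $\mathbb{P}(u)$ of a word $u$ is the integer vector $(|u|_{s_1},\dots,|u|_{s_n})$ of the numbers of occurrences of $s_1,\dots,s_n$ in $u$ (occurrences of the padding symbol $\#$ are not counted); differences of Parikh vectors are taken componentwise in $\mathbb{Z}^n$.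
   Formalization: Besides (C4) and (C11), $\mathcal{A}$ is assumed to accept only words of the form $v \otimes w$ with $v,w \in \Sigma^*$, so every accepted word is a padded pair. The paper assumes this as well. *)

theory Defs
  imports Main
begin

(* Padded alphabet Sigma_# is modelled as 'a option: Some a is the letter a, None is #. *)
definition sigma_hash :: "'a set \<Rightarrow> 'a option set" where
  "sigma_hash S = insert None (Some ` S)"

definition det_transducer ::
  "'a set \<Rightarrow> 's set \<Rightarrow> ('s \<Rightarrow> 'a option \<times> 'a option \<Rightarrow> 's option) \<Rightarrow> 's \<Rightarrow> 's set \<Rightarrow> bool" where
  "det_transducer S Q \<delta> q0 F \<longleftrightarrow>
     finite S \<and> finite Q \<and> q0 \<in> Q \<and> F \<subseteq> Q \<and>
     (\<forall>q x q'. \<delta> q x = Some q' \<longrightarrow> q \<in> Q \<and> x \<in> sigma_hash S \<times> sigma_hash S \<and> q' \<in> Q)"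

inductive path :: "('s \<Rightarrow> 'l \<Rightarrow> 's option) \<Rightarrow> 's \<Rightarrow> 'l list \<Rightarrow> 's \<Rightarrow> bool"
  for \<delta> where
  Nil: "path \<delta> q [] q"
| Cons: "\<delta> q x = Some q' \<Longrightarrow> path \<delta> q' xs q'' \<Longrightarrow> path \<delta> q (x # xs) q''"

definition accepts :: "('s \<Rightarrow> 'l \<Rightarrow> 's option) \<Rightarrow> 's \<Rightarrow> 's set \<Rightarrow> 'l list \<Rightarrow> bool" where
  "accepts \<delta> q0 F x \<longleftrightarrow> (\<exists>qf\<in>F. path \<delta> q0 x qf)"

definition conv :: "'a list \<Rightarrow> 'a list \<Rightarrow> ('a option \<times> 'a option) list" where
  "conv v w = zip (map Some v @ replicate (length w - length v) None)
                  (map Some w @ replicate (length v - length w) None)"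

definition rel_of :: "'a set \<Rightarrow> ('s \<Rightarrow> 'a option \<times> 'a option \<Rightarrow> 's option) \<Rightarrow> 's \<Rightarrow> 's set
    \<Rightarrow> ('a list \<times> 'a list) set" where
  "rel_of S \<delta> q0 F = {(v, w). v \<in> lists S \<and> w \<in> lists S \<and> accepts \<delta> q0 F (conv v w)}"

definition parikh :: "'a option list \<Rightarrow> 'a \<Rightarrow> int" where
  "parikh u s = int (length (filter (\<lambda>c. c = Some s) u))"

definition parikh_w :: "'a list \<Rightarrow> 'a \<Rightarrow> int" where
  "parikh_w u s = int (length (filter (\<lambda>c. c = s) u))"

end

theory Submission
  imports Defs
begin

(* Condition (C4) lets us extend any path q0 --> q by one fixed path y from q to an accepting
   state. Every accepted word is of the form v \<otimes> w, so by (C11) its two tracks have the same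
   Parikh vector (padding is not counted). Hence for every path x from q0 to q the Parikh
   difference of x is minus that of y, which does not depend on x. *)

lemma path_append: "path \<delta> q x q' \<Longrightarrow> path \<delta> q' y q'' \<Longrightarrow> path \<delta> q (x @ y) q''"
  by (induction rule: path.induct) (auto intro: path.Cons)

lemma det_transducer_path_target_in_states:
  "path \<delta> q x q' \<Longrightarrow> det_transducer S Q \<delta> q0 F \<Longrightarrow> q \<in> Q \<Longrightarrow> q' \<in> Q"
  by (induction rule: path.induct) (auto simp: det_transducer_def)

lemma parikh_append: "parikh (u @ u') s = parikh u s + parikh u' s"
  by (simp add: parikh_def)

lemma parikh_padded: "parikh (map Some v @ replicate k None) s = parikh_w v s"
  by (induction v) (auto simp: parikh_def parikh_w_def)

lemma parikh_map_fst_conv: "parikh (map fst (conv v w)) s = parikh_w v s"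
  unfolding conv_def by (simp add: zip_eq_conv min_def parikh_padded)

lemma parikh_map_snd_conv: "parikh (map snd (conv v w)) s = parikh_w w s"
  unfolding conv_def by (simp add: zip_eq_conv min_def parikh_padded)

lemma accepted_tracks_same_parikh:
  assumes conv_only: "\<forall>x. accepts \<delta> q0 F x \<longrightarrow> (\<exists>v\<in>lists S. \<exists>w\<in>lists S. x = conv v w)"
    and C11: "\<forall>(v, w)\<in>rel_of S \<delta> q0 F. \<forall>s\<in>S. parikh_w v s = parikh_w w s"
    and accepted: "accepts \<delta> q0 F x" and s: "s \<in> S"
  shows "parikh (map fst x) s = parikh (map snd x) s"
proof -
  obtain v w where v: "v \<in> lists S" and w: "w \<in> lists S" and x: "x = conv v w"
    using conv_only accepted by blast
  have "(v, w) \<in> rel_of S \<delta> q0 F"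
    using v w x accepted by (simp add: rel_of_def)
  with C11 s have "parikh_w v s = parikh_w w s"
    by auto
  then show ?thesis
    by (simp add: x parikh_map_fst_conv parikh_map_snd_conv)
qed

lemma parikh_diff_eq_neg_completion:
  assumes "parikh (map fst (x @ y)) s = parikh (map snd (x @ y)) s"
  shows "parikh (map snd x) s - parikh (map fst x) s = parikh (map fst y) s - parikh (map snd y) s"
  using assms by (simp add: parikh_append)

theorem mainTheorem1:
  fixes S :: "'a set" and Q :: "'s set"
    and \<delta> :: "'s \<Rightarrow> 'a option \<times> 'a option \<Rightarrow> 's option" and q0 :: 's and F :: "'s set"
  assumes A: "det_transducer S Q \<delta> q0 F"
    and conv_only: "\<forall>x. accepts \<delta> q0 F x \<longrightarrow> (\<exists>v\<in>lists S. \<exists>w\<in>lists S. x = conv v w)"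
    and C4: "\<forall>q\<in>Q. \<exists>x qf. qf \<in> F \<and> path \<delta> q x qf"
    and C11: "\<forall>(v, w)\<in>rel_of S \<delta> q0 F. \<forall>s\<in>S. parikh_w v s = parikh_w w s"
    and rho1: "path \<delta> q0 x1 q" and rho2: "path \<delta> q0 x2 q"
  shows "\<forall>s\<in>S. parikh (map snd x1) s - parikh (map fst x1) s
                = parikh (map snd x2) s - parikh (map fst x2) s"
proof
  fix s assume s: "s \<in> S"
  have "q \<in> Q"
    using det_transducer_path_target_in_states[OF rho1 A] A by (simp add: det_transducer_def)
  then obtain y qf where qf: "qf \<in> F" and y: "path \<delta> q y qf"
    using C4 by blast
  have "accepts \<delta> q0 F (x1 @ y)" "accepts \<delta> q0 F (x2 @ y)"
    using path_append[OF rho1 y] path_append[OF rho2 y] qf by (auto simp: accepts_def)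
  then have "parikh (map fst (x1 @ y)) s = parikh (map snd (x1 @ y)) s"
    "parikh (map fst (x2 @ y)) s = parikh (map snd (x2 @ y)) s"
    using accepted_tracks_same_parikh[OF conv_only C11 _ s] by blast+
  then show "parikh (map snd x1) s - parikh (map fst x1) s
                = parikh (map snd x2) s - parikh (map fst x2) s"
    by (simp add: parikh_diff_eq_neg_completion)
qed

end
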